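(* Let $(X,p)$ and $(Y,d)$ be metric spaces with $(Y,d)$ separable, and let $F: X \Rightarrow Y$ be a multi-valued function whose graph is a $\Sigma^0_2$ subset of $X \times Y$. Let $P$ be the set of points of $X$ at which $F$ is strongly continuous. (a) If $Y$ is compact and $F(x)$ is closed for every $x \in X$, then $P$ is a $\Pi^0_2$ subset of $X$. (b) If $Y$ is exhaustible by compact sets and $F(x)$ is closed for every $x \in X$, then $P$ is a $\Sigma^0_3$ subset of $X$.
   Context: A multi-valued function $F: X \Rightarrow Y$ assigns to each $x$ a nonempty set $F(x)\subseteq Y$; its graph is $\{(x,y): y\in F(x)\}\subseteq X\times Y$. $F$ is strongly continuous at $x$ if for every $y \in F(x)$ and every $\varepsilon>0$ there is $\delta>0$ such that for every $x' \in B_p(x,\delta)$ there is $y' \in F(x')$ with $d(y,y')<\varepsilon$. $Y$ is exhaustible by compact sets if there are compact $K_n\subseteq Y$ with $K_n$ contained in the interior of $K_{n+1}$ and $Y=\bigcup_n K_n$. Borel hierarchy: $\Sigma^0_1$ = open; $\Sigma^0_{n+1}$ = countable unions of sets whose complements are $\Sigma^0_k$ for some $k\le n$; $\Pi^0_n$ = complements of $\Sigma^0_n$ ($\Sigma^0_2=F_\sigma$, $\Pi^0_2=G_\delta$, $\Sigma^0_3$ = countable unions of $G_\delta$ sets). *)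

theory Defs
  imports "HOL-Analysis.Analysis"
begin

inductive borel_sigma0 :: "nat \<Rightarrow> 'a::topological_space set \<Rightarrow> bool" where
  open_sigma: "open S \<Longrightarrow> borel_sigma0 1 S"
| union_sigma: "n \<ge> 1 \<Longrightarrow> (\<forall>i::nat. \<exists>k. 1 \<le> k \<and> k \<le> n \<and> borel_sigma0 k (- A i))
      \<Longrightarrow> borel_sigma0 (Suc n) (\<Union>i. A i)"

definition borel_pi0 :: "nat \<Rightarrow> 'a::topological_space set \<Rightarrow> bool" where
  "borel_pi0 n S \<longleftrightarrow> borel_sigma0 n (- S)"

definition graph_mv :: "('a \<Rightarrow> 'b set) \<Rightarrow> ('a \<times> 'b) set" where
  "graph_mv F = {(x, y). y \<in> F x}"

definition strongly_continuous_at :: "('a::metric_space \<Rightarrow> 'b::metric_space set) \<Rightarrow> 'a \<Rightarrow> bool" where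
  "strongly_continuous_at F x \<longleftrightarrow>
     (\<forall>y\<in>F x. \<forall>\<epsilon>>0. \<exists>\<delta>>0. \<forall>x'\<in>ball x \<delta>. \<exists>y'\<in>F x'. dist y y' < \<epsilon>)"

definition exhaustible_by_compacts :: "'b::topological_space itself \<Rightarrow> bool" where
  "exhaustible_by_compacts TYPE('b) \<longleftrightarrow>
     (\<exists>K :: nat \<Rightarrow> 'b set. (\<forall>n. compact (K n)) \<and> (\<forall>n. K n \<subseteq> interior (K (Suc n)))
        \<and> (\<Union>n. K n) = UNIV)"

end

theory Submission
  imports Defs
begin

text \<open>Fix a countable dense set D. A point x fails to be a point of strong continuity
  exactly when, for some d \<in> D and n, the value F x meets ball d (1/(n+1)) but x is not
  interior to the lower inverse {x'. F x' meets ball d (2/(n+1))}. Lower inverses of open sets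
  are F-sigma: the graph is F-sigma, and the projection of a closed subset of X \<times> K along a
  compact K is closed, so writing Y as a countable union of compacts exhibits them as countable
  unions of closed sets. Hence the complement of P is F-sigma, P is Pi^0_2 whenever Y is
  sigma-compact, and (b) follows from Pi^0_2 \<subseteq> Sigma^0_3.\<close>

lemma borel_sigma0_1_imp_open: "borel_sigma0 1 S \<Longrightarrow> open S"
  by (cases rule: borel_sigma0.cases) auto

lemma borel_sigma0_2_iff_fsigma_in:
  fixes S :: "'a::topological_space set"
  shows "borel_sigma0 2 S \<longleftrightarrow> fsigma_in euclidean S"
proof
  assume "borel_sigma0 2 S"
  then obtain A :: "nat \<Rightarrow> 'a set"
    where A: "S = (\<Union>i. A i)" "\<And>i. \<exists>k. 1 \<le> k \<and> k \<le> 1 \<and> borel_sigma0 k (- A i)"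
    by (cases rule: borel_sigma0.cases) auto
  then have "\<And>i. closed (A i)"
    using borel_sigma0_1_imp_open closed_open le_antisym by metis
  then show "fsigma_in euclidean S"
    unfolding A(1) by (intro fsigma_in_Union) (auto intro: closed_imp_fsigma_in)
next
  assume "fsigma_in euclidean S"
  then obtain C :: "nat \<Rightarrow> 'a set" where C: "\<And>n. closed (C n)" "S = (\<Union>n. C n)"
    unfolding fsigma_in_ascending closed_closedin by blast
  have "\<And>n. borel_sigma0 1 (- C n)"
    using C(1) by (intro borel_sigma0.open_sigma open_Compl)
  then have "borel_sigma0 (Suc 1) (\<Union>n. C n)"
    by (intro borel_sigma0.union_sigma) auto
  then show "borel_sigma0 2 S"
    by (simp add: C(2) numeral_2_eq_2)
qed

lemma borel_pi0_imp_sigma0_Suc: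
  assumes "1 \<le> n" "borel_pi0 n S"
  shows "borel_sigma0 (Suc n) S"
  using borel_sigma0.union_sigma[of n "\<lambda>_. S"] assms
  by (auto simp: borel_pi0_def)

lemma closed_fst_image_Int_Times_compact:
  fixes C :: "('a::topological_space \<times> 'b::topological_space) set"
  assumes "closed C" "compact K"
  shows "closed (fst ` (C \<inter> (UNIV \<times> K)))"
proof -
  have "closed_map (prod_topology euclidean (top_of_set K)) euclidean fst"
    by (rule closed_map_fst) (simp add: compact_space_subtopology assms(2))
  moreover have "closedin (prod_topology euclidean (top_of_set K)) (C \<inter> (UNIV \<times> K))"
    using closedin_closed_Int[OF assms(1), of "UNIV \<times> K"]
    by (simp add: prod_topology_subtopology euclidean_product_topology Int_commute)
  ultimately show ?thesis
    unfolding closed_map_def closed_closedin by blast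
qed

lemma fsigma_in_fst_image:
  fixes S :: "('a::topological_space \<times> 'b::topological_space) set" and K :: "nat \<Rightarrow> 'b set"
  assumes "fsigma_in euclidean S"
    and K: "\<And>n. compact (K n)" "(\<Union>n. K n) = UNIV"
  shows "fsigma_in euclidean (fst ` S)"
proof -
  obtain \<C> where \<C>: "countable \<C>" "\<And>C. C \<in> \<C> \<Longrightarrow> closed C" "S = \<Union>\<C>"
    using assms(1) unfolding fsigma_in_def union_of_def closed_closedin by (metis mem_Collect_eq subsetD)
  have "S = (\<Union>C\<in>\<C>. \<Union>n. C \<inter> (UNIV \<times> K n))"
    using K(2) unfolding \<C>(3) by auto
  then have "fst ` S = (\<Union>C\<in>\<C>. \<Union>n. fst ` (C \<inter> (UNIV \<times> K n)))"
    by (simp only: image_UN)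
  also have "fsigma_in euclidean \<dots>"
  proof -
    have "fsigma_in euclidean (fst ` (C \<inter> (UNIV \<times> K n)))" if "C \<in> \<C>" for C n
      using \<C>(2)[OF that] K(1)
      by (simp add: closed_imp_fsigma_in closed_fst_image_Int_Times_compact flip: closed_closedin)
    then show ?thesis
      using \<C>(1) by (auto intro!: fsigma_in_Union)
  qed
  finally show ?thesis .
qed

definition lower_inverse :: "('a \<Rightarrow> 'b set) \<Rightarrow> 'b set \<Rightarrow> 'a set" where
  "lower_inverse F U = {x. F x \<inter> U \<noteq> {}}"

lemma fsigma_in_lower_inverse:
  fixes F :: "'a::metric_space \<Rightarrow> 'b::metric_space set" and K :: "nat \<Rightarrow> 'b set"
  assumes "fsigma_in euclidean (graph_mv F)"
    and "\<And>n. compact (K n)" "(\<Union>n. K n) = UNIV"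
    and "open U"
  shows "fsigma_in euclidean (lower_inverse F U)"
proof -
  have "lower_inverse F U = fst ` (graph_mv F \<inter> (UNIV \<times> U))"
    unfolding lower_inverse_def graph_mv_def by (auto intro: rev_image_eqI)
  moreover have "fsigma_in euclidean (graph_mv F \<inter> (UNIV \<times> U))"
    by (intro fsigma_in_Int[OF assms(1)] open_imp_fsigma_in)
      (simp_all add: metrizable_space_euclidean open_Times assms(4))
  ultimately show ?thesis
    using fsigma_in_fst_image[OF _ assms(2,3)] by simp
qed

lemma strongly_continuous_at_imp_interior_lower_inverse:
  assumes "strongly_continuous_at F x" "x \<in> lower_inverse F (ball d r)"
  shows "x \<in> interior (lower_inverse F (ball d (2 * r)))"
proof -
  obtain y where y: "y \<in> F x" "dist d y < r"
    using assms(2) by (auto simp: lower_inverse_def)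
  then have "r > 0"
    using zero_le_dist[of d y] by linarith
  then obtain \<delta> where "\<delta> > 0" and \<delta>: "\<And>x'. x' \<in> ball x \<delta> \<Longrightarrow> \<exists>y'\<in>F x'. dist y y' < r"
    using assms(1) y(1) unfolding strongly_continuous_at_def by blast
  have "ball x \<delta> \<subseteq> lower_inverse F (ball d (2 * r))"
  proof
    fix x' assume "x' \<in> ball x \<delta>"
    then obtain y' where "y' \<in> F x'" "dist y y' < r"
      using \<delta> by blast
    moreover have "dist d y' \<le> dist d y + dist y y'"
      by (rule dist_triangle)
    ultimately show "x' \<in> lower_inverse F (ball d (2 * r))"
      using y(2) by (auto simp: lower_inverse_def)
  qed
  with \<open>\<delta> > 0\<close> show ?thesis
    by (meson centre_in_ball interior_maximal open_ball subsetD)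
qed

lemma strongly_continuous_atI_dense:
  assumes "closure D = UNIV"
    and H: "\<And>d n. d \<in> D \<Longrightarrow> x \<in> lower_inverse F (ball d (1 / Suc n)) \<Longrightarrow>
                   x \<in> interior (lower_inverse F (ball d (2 / Suc n)))"
  shows "strongly_continuous_at F x"
  unfolding strongly_continuous_at_def
proof (intro ballI allI impI)
  fix y and \<epsilon> :: real assume "y \<in> F x" "\<epsilon> > 0"
  then obtain n where n: "inverse (real (Suc n)) < \<epsilon> / 3"
    using reals_Archimedean[of "\<epsilon> / 3"] by auto
  define r where "r = 1 / real (Suc n)"
  have "r > 0" "3 * r < \<epsilon>"
    using n by (simp_all add: r_def inverse_eq_divide)
  then obtain d where "d \<in> D" "dist d y < r"
    using closure_approachable[of y D] assms(1) by (auto simp: dist_commute)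
  then have "x \<in> lower_inverse F (ball d r)"
    using \<open>y \<in> F x\<close> by (auto simp: lower_inverse_def)
  then have "x \<in> interior (lower_inverse F (ball d (2 * r)))"
    using H[OF \<open>d \<in> D\<close>] by (simp add: r_def)
  then obtain \<delta> where "\<delta> > 0" and \<delta>: "ball x \<delta> \<subseteq> lower_inverse F (ball d (2 * r))"
    unfolding mem_interior by blast
  have "\<exists>y'\<in>F x'. dist y y' < \<epsilon>" if "x' \<in> ball x \<delta>" for x'
  proof -
    have "x' \<in> lower_inverse F (ball d (2 * r))"
      using \<delta> that by blast
    then obtain y' where "y' \<in> F x'" "dist d y' < 2 * r"
      by (auto simp: lower_inverse_def)
    moreover have "dist y y' \<le> dist d y + dist d y'"
      by (rule dist_triangle3)
    ultimately have "dist y y' < \<epsilon>"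
      using \<open>dist d y < r\<close> \<open>3 * r < \<epsilon>\<close> by linarith
    with \<open>y' \<in> F x'\<close> show ?thesis
      by blast
  qed
  with \<open>\<delta> > 0\<close> show "\<exists>\<delta>>0. \<forall>x'\<in>ball x \<delta>. \<exists>y'\<in>F x'. dist y y' < \<epsilon>"
    by blast
qed

lemma not_strongly_continuous_eq_Union:
  assumes "closure D = UNIV"
  shows "{x. \<not> strongly_continuous_at F x} =
    (\<Union>(d, n) \<in> D \<times> UNIV. lower_inverse F (ball d (1 / Suc n))
                             - interior (lower_inverse F (ball d (2 / Suc n))))"
proof (intro equalityI subsetI)
  fix x assume "x \<in> {x. \<not> strongly_continuous_at F x}"
  then obtain d n where "d \<in> D" "x \<in> lower_inverse F (ball d (1 / Suc n))"
      "x \<notin> interior (lower_inverse F (ball d (2 / Suc n)))"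
    using strongly_continuous_atI_dense[OF assms, of x F] by (metis mem_Collect_eq)
  then show "x \<in> (\<Union>(d, n) \<in> D \<times> UNIV. lower_inverse F (ball d (1 / Suc n))
                             - interior (lower_inverse F (ball d (2 / Suc n))))"
    by blast
next
  fix x assume "x \<in> (\<Union>(d, n) \<in> D \<times> UNIV. lower_inverse F (ball d (1 / Suc n))
                             - interior (lower_inverse F (ball d (2 / Suc n))))"
  then obtain d n where "x \<in> lower_inverse F (ball d (1 / Suc n))"
      "x \<notin> interior (lower_inverse F (ball d (2 * (1 / Suc n))))"
    by auto
  then show "x \<in> {x. \<not> strongly_continuous_at F x}"
    using strongly_continuous_at_imp_interior_lower_inverse by blast
qed

lemma fsigma_in_not_strongly_continuous:
  fixes F :: "'a::metric_space \<Rightarrow> 'b::metric_space set" and D :: "'b set"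
    and K :: "nat \<Rightarrow> 'b set"
  assumes "countable D" "closure D = UNIV"
    and "fsigma_in euclidean (graph_mv F)"
    and "\<And>n. compact (K n)" "(\<Union>n. K n) = UNIV"
  shows "fsigma_in euclidean {x. \<not> strongly_continuous_at F x}"
proof -
  have "fsigma_in euclidean (lower_inverse F (ball d (1 / Suc n))
                             - interior (lower_inverse F (ball d (2 / Suc n))))" for d n
    by (intro fsigma_in_diff fsigma_in_lower_inverse[OF assms(3-5)] open_imp_gdelta_in) auto
  then show ?thesis
    unfolding not_strongly_continuous_eq_Union[OF assms(2)]
    using assms(1) by (auto intro!: fsigma_in_Union)
qed

theorem theorem3p2:
  fixes F :: "'a::metric_space \<Rightarrow> 'b::metric_space set"
  assumes separable: "\<exists>D :: 'b set. countable D \<and> closure D = UNIV"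
    and nonempty: "\<And>x. F x \<noteq> {}"
    and graph: "borel_sigma0 2 (graph_mv F)"
  shows "(compact (UNIV :: 'b set) \<and> (\<forall>x. closed (F x))
            \<longrightarrow> borel_pi0 2 {x. strongly_continuous_at F x})
       \<and> (exhaustible_by_compacts TYPE('b) \<and> (\<forall>x. closed (F x))
            \<longrightarrow> borel_sigma0 3 {x. strongly_continuous_at F x})"
proof (intro conjI impI)
  obtain D :: "'b set" where D: "countable D" "closure D = UNIV"
    using separable by blast
  have G: "fsigma_in euclidean (graph_mv F)"
    using graph borel_sigma0_2_iff_fsigma_in by blast
  have P: "borel_pi0 2 {x. strongly_continuous_at F x}"
    if "\<And>n. compact (K n)" "(\<Union>n. K n) = UNIV" for K :: "nat \<Rightarrow> 'b set"
    using fsigma_in_not_strongly_continuous[OF D G that]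
    unfolding borel_pi0_def borel_sigma0_2_iff_fsigma_in Collect_neg_eq .
  show "borel_pi0 2 {x. strongly_continuous_at F x}"
    if "compact (UNIV :: 'b set) \<and> (\<forall>x. closed (F x))"
    using P[of "\<lambda>_. UNIV"] that by simp
  show "borel_sigma0 3 {x. strongly_continuous_at F x}"
    if exhaustible: "exhaustible_by_compacts TYPE('b) \<and> (\<forall>x. closed (F x))"
  proof -
    obtain K :: "nat \<Rightarrow> 'b set" where "\<forall>n. compact (K n)" "(\<Union>n. K n) = UNIV"
      using exhaustible unfolding exhaustible_by_compacts_def by auto
    then have "borel_pi0 2 {x. strongly_continuous_at F x}"
      using P[of K] by simp
    then have "borel_sigma0 (Suc 2) {x. strongly_continuous_at F x}"
      by (rule borel_pi0_imp_sigma0_Suc[rotated]) simp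
    then show ?thesis
      by (simp add: numeral_3_eq_3)
  qed
qed

end
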